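(* Let $0<q<\infty$. Then $\frac{\pi_{2q/(2+q),q/2}}{2^{2/q+1}}=\frac{\pi_{2q/(2+q),q}}{2}$, and for all $x\in\left[0,\frac{\pi_{2q/(2+q),q}}{2}\right)$, $$\sin_{2q/(2+q),q/2}(2^{2/q}x)=\frac{2^{2/q}\sin_{2q/(2+q),q}x}{(1+\sin_{2q/(2+q),q}^{q/2}x)^{2/q}},\qquad \cos_{2q/(2+q),q/2}(2^{2/q}x)=\left(\frac{1-\sin_{2q/(2+q),q}^{q/2}x}{1+\sin_{2q/(2+q),q}^{q/2}x}\right)^{1/q+1/2}.$$ Moreover, for the same $x$, $$\sinh_{2q/(2+q),q/2}(2^{2/q}x)=2^{2/q}\sinh_{2,q}x\,(\cosh_{2,q}x+\sinh_{2,q}^{q/2}x)^{2/q},\qquad \cosh_{2q/(2+q),q/2}(2^{2/q}x)=(\cosh_{2,q}x+\sinh_{2,q}^{q/2}x)^{2/q+1}.$$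
   Context: For $0<q<\infty$ and $\frac{q}{q+1}<p<\infty$: let $F_{p,q}(y)=\int_0^y (1-t^q)^{-1/p}\,dt$ for $y\in[0,1)$ and $\pi_{p,q}=2\int_0^1(1-t^q)^{-1/p}\,dt\in(0,\infty]$ (it equals $\infty$ when $p\le 1$). The function $\sin_{p,q}:[0,\pi_{p,q}/2)\to[0,1)$ is the inverse of $F_{p,q}$ and $\cos_{p,q}x=\frac{d}{dx}\sin_{p,q}x$. Let $G_{p,q}(y)=\int_0^y(1+t^q)^{-1/p}\,dt$ for $y\in[0,\infty)$; its range is $[0,\pi_{r,q}/2)$ with $r=\frac{pq}{pq+p-q}$. The function $\sinh_{p,q}:[0,\pi_{r,q}/2)\to[0,\infty)$ is the inverse of $G_{p,q}$ and $\cosh_{p,q}x=\frac{d}{dx}\sinh_{p,q}x$. (The parameter pairs $(2q/(2+q),q/2)$, $(2q/(2+q),q)$ and $(2,q)$ all satisfy $\frac{q'}{q'+1}<p'<\infty$ for the respective second parameter $q'$.) *)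

theory Defs
  imports "HOL-Analysis.Analysis"
begin

definition F_pq :: "real \<Rightarrow> real \<Rightarrow> real \<Rightarrow> real" where
  "F_pq p q y = integral {0..y} (\<lambda>t. (1 - t powr q) powr (-1/p))"

definition pi_pq :: "real \<Rightarrow> real \<Rightarrow> ennreal" where
  "pi_pq p q = 2 * (\<integral>\<^sup>+ t. indicator {0..<1} t * ennreal ((1 - t powr q) powr (-1/p)) \<partial>lborel)"

definition sin_pq :: "real \<Rightarrow> real \<Rightarrow> real \<Rightarrow> real" where
  "sin_pq p q x = (THE y. 0 \<le> y \<and> y < 1 \<and> F_pq p q y = x)"

definition cos_pq :: "real \<Rightarrow> real \<Rightarrow> real \<Rightarrow> real" where
  "cos_pq p q x = (THE D. (sin_pq p q has_real_derivative D) (at x within {0..}))"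

definition G_pq :: "real \<Rightarrow> real \<Rightarrow> real \<Rightarrow> real" where
  "G_pq p q y = integral {0..y} (\<lambda>t. (1 + t powr q) powr (-1/p))"

definition sinh_pq :: "real \<Rightarrow> real \<Rightarrow> real \<Rightarrow> real" where
  "sinh_pq p q x = (THE y. 0 \<le> y \<and> G_pq p q y = x)"

definition cosh_pq :: "real \<Rightarrow> real \<Rightarrow> real \<Rightarrow> real" where
  "cosh_pq p q x = (THE D. (sinh_pq p q has_real_derivative D) (at x within {0..}))"

end

theory Submission
  imports Defs
begin

(* Write c = 2^(2/q) and p = 2q/(2+q), so that 1/p = 1/q + 1/2. Each identity comes from an
   explicit change of variables in the integrals defining F and G, checked by comparing
   derivatives:
     F_{p,q/2}(U t) = c F_{p,q}(t)  for  U t = c t / (1 + t^(q/2))^(2/q),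
     G_{p,q/2}(V s) = c G_{2,q}(s)  for  V s = c s ((1 + s^q)^(1/2) + s^(q/2))^(2/q),
     G_{2,q}(T s) = F_{p,q}(s)      for  T s = s (1 - s^q)^(-1/q)
   (U, V and T are sin_rescale q, sinh_rescale q and sin_to_sinh q). Inverting the first two
   identities gives the formulas for sin and sinh, and the inverse function rule gives those
   for cos and cosh. The third one shows that every x below pi_{p,q}/2 is a value of G_{2,q},
   namely x = G_{2,q}(T (sin_{p,q} x)). Since U maps [0,1) into itself with U t >= t, taking
   suprema in the first identity gives pi_{p,q/2} = c pi_{p,q}. *)

section \<open>Calculus on the real line\<close>

lemma at_within_Icc_eq_Ici:
  fixes x a b :: real
  assumes "x < b"
  shows "at x within {a..b} = at x within {a..}"
  by (rule at_within_nhd[of x "{..<b}"]) (use assms in auto)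

lemma at_within_Ici_eq_at:
  fixes x a :: real
  assumes "a < x"
  shows "at x within {a..} = at x"
proof -
  have "at x within {a..} = at x within UNIV"
    by (rule at_within_nhd[of x "{a<..}"]) (use assms in auto)
  then show ?thesis
    by simp
qed

lemma has_real_derivative_within_Ici_unique:
  fixes f :: "real \<Rightarrow> real"
  assumes "a \<le> x"
    and "(f has_real_derivative D) (at x within {a..})"
    and "(f has_real_derivative E) (at x within {a..})"
  shows "D = E"
proof -
  have "x islimpt {a..x+1}"
    using assms(1) by simp
  then have "at x within {a..} \<noteq> bot"
    by (metis atLeastAtMost_iff atLeast_iff islimpt_subset subsetI trivial_limit_within)
  then show ?thesis
    using vector_derivative_unique_within assms(2,3)
    by (metis has_real_derivative_iff_has_vector_derivative)
qed

lemma has_real_derivative_inverse_within: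
  fixes f g :: "real \<Rightarrow> real"
  assumes f_deriv: "(f has_real_derivative D) (at (g x) within T)" and "D \<noteq> 0"
    and g_cont: "continuous (at x within S) g"
    and g_maps: "\<And>z. z \<in> S \<Longrightarrow> g z \<in> T"
    and inverse: "\<And>z. z \<in> S \<Longrightarrow> f (g z) = z" and "x \<in> S"
  shows "(g has_real_derivative inverse D) (at x within S)"
proof -
  have g_lim: "filterlim g (at (g x) within T) (at x within S)"
    unfolding filterlim_at
  proof
    show "\<forall>\<^sub>F z in at x within S. g z \<in> T \<and> g z \<noteq> g x"
      unfolding eventually_at_filter
      by (rule always_eventually) (metis g_maps inverse \<open>x \<in> S\<close>)
    show "(g \<longlongrightarrow> g x) (at x within S)"
      using g_cont continuous_within by blast
  qed
  have "((\<lambda>w. (f w - f (g x)) / (w - g x)) \<longlongrightarrow> D) (at (g x) within T)"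
    using f_deriv has_field_derivative_iff by blast
  from filterlim_compose[OF this g_lim]
  have "((\<lambda>z. (f (g z) - f (g x)) / (g z - g x)) \<longlongrightarrow> D) (at x within S)"
    by (simp add: o_def)
  moreover have "\<forall>\<^sub>F z in at x within S.
      (f (g z) - f (g x)) / (g z - g x) = (z - x) / (g z - g x)"
    unfolding eventually_at_filter
    by (rule always_eventually) (simp add: inverse \<open>x \<in> S\<close>)
  ultimately have "((\<lambda>z. (z - x) / (g z - g x)) \<longlongrightarrow> D) (at x within S)"
    by (rule Lim_transform_eventually)
  then have "((\<lambda>z. inverse ((z - x) / (g z - g x))) \<longlongrightarrow> inverse D) (at x within S)"
    using \<open>D \<noteq> 0\<close> by (rule tendsto_inverse)
  then show ?thesis
    unfolding has_field_derivative_iff by simp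
qed

lemma eq_of_has_real_derivative_eq:
  fixes f g :: "real \<Rightarrow> real"
  assumes "a \<le> b" "continuous_on {a..b} f" "continuous_on {a..b} g" "f a = g a"
    and "\<And>t. a < t \<Longrightarrow> t < b \<Longrightarrow> (f has_real_derivative D t) (at t)"
    and "\<And>t. a < t \<Longrightarrow> t < b \<Longrightarrow> (g has_real_derivative D t) (at t)"
  shows "f b = g b"
proof (cases "a = b")
  case False
  have "f b - g b = f a - g a"
  proof (rule DERIV_isconst2[of a b "\<lambda>t. f t - g t"])
    show "continuous_on {a..b} (\<lambda>t. f t - g t)"
      using assms(2,3) by (rule continuous_on_diff)
    show "((\<lambda>t. f t - g t) has_real_derivative 0) (at t)" if "a < t" "t < b" for t
      using DERIV_diff[OF assms(5,6)[OF that]] by simp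
  qed (use assms(1) False in auto)
  then show ?thesis
    using assms(4) by simp
qed (use assms(4) in simp)

lemma nn_integral_Icc_eq_integral:
  fixes \<phi> :: "real \<Rightarrow> real"
  assumes "continuous_on {a..b} \<phi>" "\<And>t. 0 \<le> \<phi> t" "\<phi> \<in> borel_measurable borel"
  shows "(\<integral>\<^sup>+ t. indicator {a..b} t * ennreal (\<phi> t) \<partial>lborel) = ennreal (integral {a..b} \<phi>)"
proof -
  have "(\<phi> has_integral integral {a..b} \<phi>) {a..b}"
    using assms(1) by (intro integrable_integral integrable_continuous_interval)
  then have "((\<lambda>t. indicator {a..b} t * \<phi> t) has_integral integral {a..b} \<phi>) UNIV"
    by (simp only: indicator_times_eq_if has_integral_restrict_UNIV)
  then have "(\<integral>\<^sup>+ t. ennreal (indicator {a..b} t * \<phi> t) \<partial>lborel) = ennreal (integral {a..b} \<phi>)"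
    by (rule nn_integral_has_integral_lborel[rotated 2]) (use assms(2,3) in auto)
  then show ?thesis
    by (simp only: indicator_mult_ennreal)
qed

lemma incseq_Icc_exhausting_Ico:
  fixes a b :: real
  assumes "a < b"
  obtains Y :: "nat \<Rightarrow> real" where "\<And>n. Y n \<in> {a..<b}" "incseq Y"
    "\<And>t. (SUP n. indicator {a..Y n} t) = (indicator {a..<b} t :: ennreal)"
proof
  define Y where "Y n = b - (b - a) / (real n + 2)" for n :: nat
  show Y: "Y n \<in> {a..<b}" for n
  proof -
    have "(b - a) / (real n + 2) \<le> (b - a) / 1"
      using assms by (intro divide_left_mono) auto
    then show ?thesis
      using assms by (simp add: Y_def)
  qed
  show "incseq Y"
  proof (rule incseq_SucI)
    fix n
    have "(b - a) / (real (Suc n) + 2) \<le> (b - a) / (real n + 2)"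
      using assms by (intro divide_left_mono) auto
    then show "Y n \<le> Y (Suc n)"
      by (simp add: Y_def)
  qed
  show "(SUP n. indicator {a..Y n} t) = (indicator {a..<b} t :: ennreal)" for t
  proof (cases "t \<in> {a..<b}")
    case True
    obtain n :: nat where "(b - a) / (b - t) < real n"
      using reals_Archimedean2 by blast
    then have "b - a < (real n + 2) * (b - t)"
      using True by (simp add: pos_divide_less_eq distrib_right)
    then have "(b - a) / (real n + 2) < b - t"
      by (simp add: pos_divide_less_eq mult.commute)
    then have "t \<le> Y n"
      by (simp add: Y_def)
    then have "(SUP n. indicator {a..Y n} t) = (1 :: ennreal)"
      using True by (intro antisym SUP_least SUP_upper2[of n]) (auto simp: indicator_def)
    then show ?thesis
      using True by simp
  next
    case False
    then have "indicator {a..Y n} t = (0 :: ennreal)" for n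
      using Y[of n] by (auto simp: indicator_def)
    then show ?thesis
      using False by simp
  qed
qed

lemma nn_integral_Ico_eq_SUP_integral:
  fixes \<phi> :: "real \<Rightarrow> real"
  assumes "a < b" and cont: "continuous_on {a..<b} \<phi>"
    and nonneg: "\<And>t. 0 \<le> \<phi> t" and meas: "\<phi> \<in> borel_measurable borel"
  shows "(\<integral>\<^sup>+ t. indicator {a..<b} t * ennreal (\<phi> t) \<partial>lborel)
    = (SUP y\<in>{a..<b}. ennreal (integral {a..y} \<phi>))"
proof -
  have Icc: "(\<integral>\<^sup>+ t. indicator {a..y} t * ennreal (\<phi> t) \<partial>lborel) = ennreal (integral {a..y} \<phi>)"
    if "y \<in> {a..<b}" for y
    using that nonneg meas by (intro nn_integral_Icc_eq_integral continuous_on_subset[OF cont]) auto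
  obtain Y where Y: "\<And>n. Y n \<in> {a..<b}" and "incseq Y"
    and exhaust: "\<And>t. (SUP n. indicator {a..Y n} t) = (indicator {a..<b} t :: ennreal)"
    using incseq_Icc_exhausting_Ico[OF \<open>a < b\<close>] by blast
  have "(\<integral>\<^sup>+ t. indicator {a..<b} t * ennreal (\<phi> t) \<partial>lborel)
      = (\<integral>\<^sup>+ t. (SUP n. indicator {a..Y n} t * ennreal (\<phi> t)) \<partial>lborel)"
    unfolding exhaust[symmetric] SUP_mult_right_ennreal ..
  also have "\<dots> = (SUP n. \<integral>\<^sup>+ t. indicator {a..Y n} t * ennreal (\<phi> t) \<partial>lborel)"
  proof (rule nn_integral_monotone_convergence_SUP)
    show "incseq (\<lambda>n t. indicator {a..Y n} t * ennreal (\<phi> t))"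
      using \<open>incseq Y\<close> by (intro incseq_SucI le_funI mult_right_mono)
        (auto simp: incseq_Suc_iff indicator_def intro: order_trans)
  qed (use meas in measurable)
  also have "\<dots> = (SUP n. ennreal (integral {a..Y n} \<phi>))"
    using Icc[OF Y] by simp
  finally have limit: "(\<integral>\<^sup>+ t. indicator {a..<b} t * ennreal (\<phi> t) \<partial>lborel)
      = (SUP n. ennreal (integral {a..Y n} \<phi>))" .
  show ?thesis
  proof (rule antisym)
    show "(\<integral>\<^sup>+ t. indicator {a..<b} t * ennreal (\<phi> t) \<partial>lborel)
        \<le> (SUP y\<in>{a..<b}. ennreal (integral {a..y} \<phi>))"
      unfolding limit using Y by (auto intro!: SUP_least SUP_upper)
    show "(SUP y\<in>{a..<b}. ennreal (integral {a..y} \<phi>))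
        \<le> (\<integral>\<^sup>+ t. indicator {a..<b} t * ennreal (\<phi> t) \<partial>lborel)"
    proof (rule SUP_least)
      fix y assume "y \<in> {a..<b}"
      then show "ennreal (integral {a..y} \<phi>)
          \<le> (\<integral>\<^sup>+ t. indicator {a..<b} t * ennreal (\<phi> t) \<partial>lborel)"
        unfolding Icc[OF \<open>y \<in> {a..<b}\<close>, symmetric]
        by (intro nn_integral_mono) (auto simp: indicator_def)
    qed
  qed
qed

lemma powr_less_one:
  fixes t r :: real
  assumes "0 < r" "0 \<le> t" "t < 1"
  shows "t powr r < 1"
  using powr_less_mono2[of r t 1] assms by simp

lemma continuous_on_powr_right:
  fixes r :: real
  assumes "0 < r" "S \<subseteq> {0..}"
  shows "continuous_on S (\<lambda>t. t powr r)"
  using assms by (intro continuous_on_powr' continuous_intros) auto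

lemma powr_self_mult:
  fixes a b :: real
  assumes "0 < a"
  shows "a powr b * a = a powr (b + 1)"
  using assms by (simp add: powr_add)

lemma powr_half_squared:
  fixes t q :: real
  assumes "0 \<le> t"
  shows "(t powr (q/2))\<^sup>2 = t powr q"
  using assms by (simp add: power2_eq_square powr_add[symmetric])

lemma one_plus_powr_half_squared:
  fixes s q :: real
  assumes "0 \<le> s"
  shows "((1 + s powr q) powr (1/2))\<^sup>2 = 1 + (s powr (q/2))\<^sup>2"
proof -
  have "((1 + s powr q) powr (1/2))\<^sup>2 = 1 + s powr q"
    by (simp add: power2_eq_square powr_add[symmetric] add_nonneg_eq_0_iff)
  then show ?thesis
    using powr_half_squared[OF assms] by simp
qed

lemma powr_ratio_mult_powr:
  fixes a e :: real
  assumes "0 \<le> a" "a < 1"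
  shows "((1 - a) / (1 + a)) powr e * (1 + a) powr (2 * e) = (1 - a\<^sup>2) powr e"
proof -
  have "(1 + a) powr (2 * e) = (1 + a) powr e * (1 + a) powr e"
    by (simp add: powr_add[symmetric])
  moreover have "1 - a\<^sup>2 = (1 - a) * (1 + a)"
    by (simp add: power2_eq_square algebra_simps)
  moreover have "0 < 1 + a"
    using assms by simp
  ultimately show ?thesis
    using assms by (simp add: powr_divide powr_mult)
qed

section \<open>Primitives of positive functions\<close>

(* The conditions on I say that I = [0, b) for some 0 < b <= infinity. *)
locale increasing_primitive =
  fixes I :: "real set" and \<phi> \<Phi> :: "real \<Rightarrow> real"
  assumes down_closed: "\<And>b. b \<in> I \<Longrightarrow> {0..b} \<subseteq> I"
    and no_max: "\<And>y. y \<in> I \<Longrightarrow> \<exists>b\<in>I. y < b"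
    and nonneg: "I \<subseteq> {0..}"
    and continuous: "continuous_on I \<phi>"
    and pos: "\<And>t. t \<in> I \<Longrightarrow> 0 < \<phi> t"
    and primitive: "\<And>y. \<Phi> y = integral {0..y} \<phi>"
begin

lemma zero [simp]: "\<Phi> 0 = 0"
  by (simp add: primitive)

lemma has_derivative_within:
  assumes "y \<in> I"
  shows "(\<Phi> has_real_derivative \<phi> y) (at y within {0..})"
proof -
  obtain b where b: "b \<in> I" "y < b"
    using no_max assms by blast
  have "continuous_on {0..b} \<phi>"
    using continuous down_closed[OF b(1)] continuous_on_subset by blast
  moreover have "y \<in> {0..b}"
    using assms b nonneg by auto
  ultimately have "(\<Phi> has_real_derivative \<phi> y) (at y within {0..b})"
    unfolding primitive[abs_def] by (rule integral_has_real_derivative)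
  then show ?thesis
    using at_within_Icc_eq_Ici[OF b(2)] by simp
qed

lemma has_derivative_at:
  assumes "y \<in> I" "0 < y"
  shows "(\<Phi> has_real_derivative \<phi> y) (at y)"
  using has_derivative_within[OF assms(1)] at_within_Ici_eq_at[OF assms(2)] by simp

lemma continuous_on_primitive: "continuous_on I \<Phi>"
  unfolding continuous_on_eq_continuous_within
  using nonneg by (metis DERIV_continuous continuous_within_subset has_derivative_within)

lemma strict_mono_on_primitive: "strict_mono_on I \<Phi>"
proof (rule strict_mono_onI)
  fix y z assume "y \<in> I" "z \<in> I" "y < z"
  then have "{y..z} \<subseteq> I"
    using down_closed nonneg by force
  show "\<Phi> y < \<Phi> z"
  proof (rule DERIV_pos_imp_increasing_open[OF \<open>y < z\<close>])
    fix t assume "y < t" "t < z"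
    then have "t \<in> I" "0 < t"
      using \<open>{y..z} \<subseteq> I\<close> \<open>y \<in> I\<close> nonneg by auto
    then show "\<exists>D. (\<Phi> has_real_derivative D) (at t) \<and> 0 < D"
      using has_derivative_at pos by blast
  qed (use \<open>{y..z} \<subseteq> I\<close> continuous_on_primitive continuous_on_subset in blast)
qed

lemma inj_on_primitive: "inj_on \<Phi> I"
  by (rule strict_mono_on_imp_inj_on[OF strict_mono_on_primitive])

lemma mono_on_primitive: "mono_on I \<Phi>"
  by (rule strict_mono_on_imp_mono_on[OF strict_mono_on_primitive])

lemma image_Icc:
  assumes "b \<in> I"
  shows "\<Phi> ` {0..b} = {0..\<Phi> b}"
proof
  have "{0..b} \<subseteq> I"
    using down_closed[OF assms] .
  moreover have "0 \<le> b"
    using assms nonneg by auto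
  ultimately have "0 \<in> I"
    by auto
  with \<open>{0..b} \<subseteq> I\<close> show "\<Phi> ` {0..b} \<subseteq> {0..\<Phi> b}"
    using mono_on_primitive assms by (force dest: mono_onD[of I \<Phi>])
  have "continuous_on {0..b} \<Phi>"
    using \<open>{0..b} \<subseteq> I\<close> continuous_on_primitive continuous_on_subset by blast
  then show "{0..\<Phi> b} \<subseteq> \<Phi> ` {0..b}"
    using IVT'[of \<Phi> 0 _ b] assms nonneg by (force simp: image_iff)
qed

lemma inverse_has_derivative:
  assumes inverse: "\<And>z. z \<in> I \<Longrightarrow> g (\<Phi> z) = z" and "y \<in> I"
  shows "(g has_real_derivative inverse (\<phi> y)) (at (\<Phi> y) within {0..})"
proof -
  obtain b where b: "b \<in> I" "y < b"
    using no_max \<open>y \<in> I\<close> by blast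
  have "{0..b} \<subseteq> I"
    using down_closed[OF b(1)] .
  have "continuous_on (\<Phi> ` {0..b}) g"
    by (rule continuous_on_inv)
       (use \<open>{0..b} \<subseteq> I\<close> continuous_on_primitive continuous_on_subset inverse in auto)
  then have g_cont: "continuous_on {0..\<Phi> b} g"
    using image_Icc[OF b(1)] by simp
  have "y \<in> {0..b}"
    using \<open>y \<in> I\<close> b(2) nonneg by auto
  then have y_mem: "\<Phi> y \<in> {0..\<Phi> b}"
    using image_Icc[OF b(1)] by blast
  have "(g has_real_derivative inverse (\<phi> y)) (at (\<Phi> y) within {0..\<Phi> b})"
  proof (rule has_real_derivative_inverse_within[where T = "{0..}"])
    show "(\<Phi> has_real_derivative \<phi> y) (at (g (\<Phi> y)) within {0..})"
      using has_derivative_within \<open>y \<in> I\<close> inverse by simp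
    show "continuous (at (\<Phi> y) within {0..\<Phi> b}) g"
      using g_cont y_mem continuous_on_eq_continuous_within by blast
    fix z assume "z \<in> {0..\<Phi> b}"
    then obtain t where "t \<in> {0..b}" "z = \<Phi> t"
      using image_Icc[OF b(1)] by blast
    then show "g z \<in> {0..}" "\<Phi> (g z) = z"
      using \<open>{0..b} \<subseteq> I\<close> inverse by auto
  qed (use pos \<open>y \<in> I\<close> y_mem in \<open>auto simp: less_imp_neq[symmetric]\<close>)
  moreover have "\<Phi> y < \<Phi> b"
    using strict_mono_onD[OF strict_mono_on_primitive \<open>y \<in> I\<close> b(1,2)] .
  ultimately show ?thesis
    using at_within_Icc_eq_Ici by simp
qed

lemma substitution:
  assumes target: "increasing_primitive J \<psi> \<Psi>" and "s \<in> J"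
    and u_cont: "continuous_on {0..s} u" and u_maps: "u ` {0..s} \<subseteq> I" and "u 0 = 0"
    and u_pos: "\<And>t. 0 < t \<Longrightarrow> t < s \<Longrightarrow> 0 < u t"
    and u_deriv: "\<And>t. 0 < t \<Longrightarrow> t < s \<Longrightarrow> (u has_real_derivative u' t) (at t)"
    and ode: "\<And>t. 0 < t \<Longrightarrow> t < s \<Longrightarrow> \<phi> (u t) * u' t = c * \<psi> t"
  shows "\<Phi> (u s) = c * \<Psi> s"
proof -
  interpret target: increasing_primitive J \<psi> \<Psi>
    by (rule target)
  have "{0..s} \<subseteq> J"
    using target.down_closed \<open>s \<in> J\<close> .
  show ?thesis
  proof (rule eq_of_has_real_derivative_eq[where f = "\<lambda>t. \<Phi> (u t)" and g = "\<lambda>t. c * \<Psi> t"])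
    show "0 \<le> s"
      using \<open>s \<in> J\<close> target.nonneg by auto
    show "continuous_on {0..s} (\<lambda>t. \<Phi> (u t))"
      using continuous_on_compose2[OF continuous_on_primitive u_cont u_maps] .
    show "continuous_on {0..s} (\<lambda>t. c * \<Psi> t)"
      using \<open>{0..s} \<subseteq> J\<close> target.continuous_on_primitive
      by (intro continuous_on_mult_left) (rule continuous_on_subset)
    fix t assume "0 < t" "t < s"
    then have "u t \<in> I" "t \<in> J"
      using u_maps \<open>{0..s} \<subseteq> J\<close> by auto
    show "((\<lambda>t. \<Phi> (u t)) has_real_derivative c * \<psi> t) (at t)"
      using DERIV_chain2[OF has_derivative_at[OF \<open>u t \<in> I\<close>] u_deriv] u_pos ode \<open>0 < t\<close> \<open>t < s\<close>
      by simp
    show "((\<lambda>t. c * \<Psi> t) has_real_derivative c * \<psi> t) (at t)"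
      using target.has_derivative_at[OF \<open>t \<in> J\<close> \<open>0 < t\<close>] by (rule DERIV_cmult)
  qed (simp add: \<open>u 0 = 0\<close>)
qed

end

lemma increasing_primitive_F_pq:
  assumes "0 < r"
  shows "increasing_primitive {0..<1} (\<lambda>t. (1 - t powr r) powr (-1/p)) (F_pq p r)"
proof
  show "\<exists>b\<in>{0..<1}. y < b" if "y \<in> {0..<1}" for y :: real
    using that by (intro bexI[of _ "(y + 1) / 2"]) auto
  have "continuous_on {0..<1} (\<lambda>t. 1 - t powr r)"
    using assms by (intro continuous_intros continuous_on_powr') auto
  then show "continuous_on {0..<1} (\<lambda>t. (1 - t powr r) powr (-1/p))"
    using powr_less_one[OF assms] by (intro continuous_on_powr continuous_on_const) force+
  show "0 < (1 - t powr r) powr (-1/p)" if "t \<in> {0..<1}" for t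
  proof -
    have "t powr r < 1"
      using powr_less_one[OF assms] that by simp
    then show ?thesis
      by simp
  qed
qed (auto simp: F_pq_def)

lemma increasing_primitive_G_pq:
  assumes "0 < r"
  shows "increasing_primitive {0..} (\<lambda>t. (1 + t powr r) powr (-1/p)) (G_pq p r)"
proof
  show "\<exists>b\<in>{0..}. y < b" if "y \<in> {0..}" for y :: real
    using that by (intro bexI[of _ "y + 1"]) auto
  have "continuous_on {0..} (\<lambda>t. 1 + t powr r)"
    using assms by (intro continuous_intros continuous_on_powr') auto
  then show "continuous_on {0..} (\<lambda>t. (1 + t powr r) powr (-1/p))"
    by (intro continuous_on_powr continuous_on_const) (auto simp: add_nonneg_eq_0_iff)
  show "0 < (1 + t powr r) powr (-1/p)" for t
    by (simp add: add_nonneg_eq_0_iff)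
qed (auto simp: G_pq_def)

lemma sin_pq_F_pq:
  assumes "0 < r" "0 \<le> s" "s < 1"
  shows "sin_pq p r (F_pq p r s) = s"
proof -
  interpret increasing_primitive "{0..<1}" "\<lambda>t. (1 - t powr r) powr (-1/p)" "F_pq p r"
    using assms(1) by (rule increasing_primitive_F_pq)
  show ?thesis
    unfolding sin_pq_def
    by (rule the_equality) (use assms inj_on_primitive in \<open>auto dest: inj_onD\<close>)
qed

lemma cos_pq_F_pq:
  assumes "0 < r" "0 \<le> s" "s < 1"
  shows "cos_pq p r (F_pq p r s) = (1 - s powr r) powr (1/p)"
proof -
  interpret increasing_primitive "{0..<1}" "\<lambda>t. (1 - t powr r) powr (-1/p)" "F_pq p r"
    using assms(1) by (rule increasing_primitive_F_pq)
  have "(sin_pq p r has_real_derivative inverse ((1 - s powr r) powr (-1/p))) (at (F_pq p r s) within {0..})"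
    by (rule inverse_has_derivative) (use assms sin_pq_F_pq in auto)
  moreover have "inverse ((1 - s powr r) powr (-1/p)) = (1 - s powr r) powr (1/p)"
    by (simp add: powr_minus[symmetric])
  moreover have "0 \<le> F_pq p r s"
    using mono_onD[OF mono_on_primitive, of 0 s] assms by simp
  ultimately show ?thesis
    unfolding cos_pq_def using has_real_derivative_within_Ici_unique by (intro the_equality) auto
qed

lemma sinh_pq_G_pq:
  assumes "0 < r" "0 \<le> s"
  shows "sinh_pq p r (G_pq p r s) = s"
proof -
  interpret increasing_primitive "{0..}" "\<lambda>t. (1 + t powr r) powr (-1/p)" "G_pq p r"
    using assms(1) by (rule increasing_primitive_G_pq)
  show ?thesis
    unfolding sinh_pq_def
    by (rule the_equality) (use assms inj_on_primitive in \<open>auto dest: inj_onD\<close>)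
qed

lemma cosh_pq_G_pq:
  assumes "0 < r" "0 \<le> s"
  shows "cosh_pq p r (G_pq p r s) = (1 + s powr r) powr (1/p)"
proof -
  interpret increasing_primitive "{0..}" "\<lambda>t. (1 + t powr r) powr (-1/p)" "G_pq p r"
    using assms(1) by (rule increasing_primitive_G_pq)
  have "(sinh_pq p r has_real_derivative inverse ((1 + s powr r) powr (-1/p))) (at (G_pq p r s) within {0..})"
    by (rule inverse_has_derivative) (use assms sinh_pq_G_pq in auto)
  moreover have "inverse ((1 + s powr r) powr (-1/p)) = (1 + s powr r) powr (1/p)"
    by (simp add: powr_minus[symmetric])
  moreover have "0 \<le> G_pq p r s"
    using mono_onD[OF mono_on_primitive, of 0 s] assms by simp
  ultimately show ?thesis
    unfolding cosh_pq_def using has_real_derivative_within_Ici_unique by (intro the_equality) auto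
qed

lemma pi_pq_eq_SUP_F_pq:
  assumes "0 < r"
  shows "pi_pq p r = 2 * (SUP y\<in>{0..<1}. ennreal (F_pq p r y))"
proof -
  interpret increasing_primitive "{0..<1}" "\<lambda>t. (1 - t powr r) powr (-1/p)" "F_pq p r"
    using assms(1) by (rule increasing_primitive_F_pq)
  show ?thesis
    unfolding pi_pq_def primitive
    by (subst nn_integral_Ico_eq_SUP_integral) (use continuous in simp_all)
qed

lemma half_pi_pq_eq_SUP_F_pq:
  assumes "0 < r"
  shows "pi_pq p r / 2 = (SUP y\<in>{0..<1}. ennreal (F_pq p r y))"
  unfolding pi_pq_eq_SUP_F_pq[OF assms] by (subst mult.commute) (rule ennreal_mult_divide_eq; simp)

lemma F_pq_attains_below_half_pi:
  assumes "0 < r" "0 \<le> x" "ennreal x < pi_pq p r / 2"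
  obtains s where "0 \<le> s" "s < 1" "F_pq p r s = x"
proof -
  interpret increasing_primitive "{0..<1}" "\<lambda>t. (1 - t powr r) powr (-1/p)" "F_pq p r"
    using assms(1) by (rule increasing_primitive_F_pq)
  from assms(3) half_pi_pq_eq_SUP_F_pq[OF assms(1)] obtain y where "y \<in> {0..<1}" "x < F_pq p r y"
    using assms(2) by (auto simp: less_SUP_iff ennreal_less_iff)
  then have "x \<in> F_pq p r ` {0..y}"
    using image_Icc assms(2) by auto
  then show ?thesis
    using that \<open>y \<in> {0..<1}\<close> by auto
qed

section \<open>Changes of variables\<close>

definition sin_to_sinh :: "real \<Rightarrow> real \<Rightarrow> real" where
  "sin_to_sinh q s = s * (1 - s powr q) powr (-1/q)"

lemma sin_to_sinh_has_derivative:
  assumes "0 < q" "0 < s" "s < 1"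
  shows "(sin_to_sinh q has_real_derivative (1 - s powr q) powr (-1/q - 1)) (at s)"
proof -
  define b where "b = 1 - s powr q"
  have "0 < b"
    using powr_less_one[of q s] assms by (simp add: b_def)
  have "(sin_to_sinh q has_real_derivative
      b powr (-1/q) + s * ((-1/q) * b powr (-1/q - 1) * (- (q * s powr (q - 1))))) (at s)"
    unfolding sin_to_sinh_def[abs_def] b_def using assms \<open>0 < b\<close>[unfolded b_def]
    by (auto intro!: derivative_eq_intros)
  moreover have "b powr (-1/q) + s * ((-1/q) * b powr (-1/q - 1) * (- (q * s powr (q - 1))))
      = b powr (-1/q - 1) * (b + s * s powr (q - 1))"
    using powr_self_mult[OF \<open>0 < b\<close>, of "-1/q - 1"] assms by (simp add: algebra_simps)
  moreover have "s * s powr (q - 1) = s powr q"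
    using powr_self_mult[OF \<open>0 < s\<close>, of "q - 1"] by (simp add: mult.commute)
  ultimately show ?thesis
    by (simp add: b_def)
qed

lemma G_pq_sin_to_sinh:
  assumes "p \<noteq> 0" "0 < q" "0 \<le> s" "s < 1"
  shows "G_pq p q (sin_to_sinh q s) = F_pq (p*q / (p*q + p - q)) q s"
proof -
  define r where "r = p*q / (p*q + p - q)"
  have r_inv: "-1/r = 1/p + (-1/q - 1)"
    using assms(1,2) by (simp add: r_def field_simps)
  interpret G: increasing_primitive "{0..}" "\<lambda>t. (1 + t powr q) powr (-1/p)" "G_pq p q"
    using assms(2) by (rule increasing_primitive_G_pq)
  have "G_pq p q (sin_to_sinh q s) = 1 * F_pq r q s"
  proof (rule G.substitution[OF increasing_primitive_F_pq[OF assms(2)]])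
    have "t powr q < 1" if "t \<in> {0..s}" for t
      using powr_less_one[OF assms(2)] that assms(4) by auto
    then show "continuous_on {0..s} (sin_to_sinh q)"
      unfolding sin_to_sinh_def[abs_def] using assms(2)
      by (intro continuous_on_powr_right continuous_intros) (auto simp: less_imp_neq)
    show "sin_to_sinh q ` {0..s} \<subseteq> {0..}"
      by (auto simp: sin_to_sinh_def)
    fix t assume "0 < t" "t < s"
    then have "t powr q < 1"
      using powr_less_one[OF assms(2)] assms(4) by auto
    then show "0 < sin_to_sinh q t"
      using \<open>0 < t\<close> by (simp add: sin_to_sinh_def)
    show "(sin_to_sinh q has_real_derivative (1 - t powr q) powr (-1/q - 1)) (at t)"
      using sin_to_sinh_has_derivative assms \<open>0 < t\<close> \<open>t < s\<close> by simp
    define b where "b = 1 - t powr q"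
    have "0 < b"
      using \<open>t powr q < 1\<close> by (simp add: b_def)
    have "sin_to_sinh q t powr q = t powr q * b powr (-1)"
      using \<open>0 < t\<close> \<open>0 < b\<close> assms(2)
      by (simp add: sin_to_sinh_def b_def powr_mult powr_powr)
    then have "1 + sin_to_sinh q t powr q = b powr (-1)"
      using \<open>0 < b\<close> by (simp add: powr_minus_divide field_simps b_def)
    then have "(1 + sin_to_sinh q t powr q) powr (-1/p) = b powr (1/p)"
      by (simp only: powr_powr) simp
    then show "(1 + sin_to_sinh q t powr q) powr (-1/p) * b powr (-1/q - 1) = 1 * b powr (-1/r)"
      unfolding r_inv powr_add by simp
  qed (use assms in \<open>auto simp: sin_to_sinh_def\<close>)
  then show ?thesis
    by (simp add: r_def)
qed

definition sin_rescale :: "real \<Rightarrow> real \<Rightarrow> real" where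
  "sin_rescale q t = 2 powr (2/q) * t / (1 + t powr (q/2)) powr (2/q)"

context
  fixes q :: real
  assumes q: "0 < q"
begin

lemma sin_rescale_powr:
  assumes "0 \<le> t"
  shows "sin_rescale q t powr (q/2) = 2 * t powr (q/2) / (1 + t powr (q/2))"
proof -
  have "(2 powr (2/q)) powr (q/2) = 2"
    using q by (simp add: powr_powr)
  moreover have "((1 + t powr (q/2)) powr (2/q)) powr (q/2) = 1 + t powr (q/2)"
    using q by (simp add: powr_powr add_nonneg_eq_0_iff)
  ultimately show ?thesis
    using assms by (simp add: sin_rescale_def powr_divide powr_mult)
qed

lemma sin_rescale_bounds:
  assumes "0 \<le> t" "t < 1"
  shows "t \<le> sin_rescale q t" "sin_rescale q t < 1"
proof -
  have "t powr (q/2) < 1"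
    using powr_less_one[of "q/2" t] q assms by simp
  then have "(1 + t powr (q/2)) powr (2/q) \<le> 2 powr (2/q)"
    using q by (intro powr_mono2) auto
  then show "t \<le> sin_rescale q t"
    using assms by (simp add: sin_rescale_def le_divide_eq add_nonneg_eq_0_iff mult_left_mono mult.commute)
  have "sin_rescale q t powr (q/2) < 1 powr (q/2)"
    using \<open>t powr (q/2) < 1\<close> assms by (simp add: sin_rescale_powr pos_divide_less_eq add_pos_nonneg)
  moreover have "0 \<le> sin_rescale q t"
    using assms by (simp add: sin_rescale_def)
  ultimately show "sin_rescale q t < 1"
    using q powr_less_cancel2[of "q/2" "sin_rescale q t" 1] by linarith
qed

lemma sin_rescale_has_derivative:
  assumes "0 < t"
  shows "(sin_rescale q has_real_derivative 2 powr (2/q) * (1 + t powr (q/2)) powr (-2/q - 1)) (at t)"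
proof -
  define a where "a = t powr (q/2)"
  have "0 < 1 + a"
    by (simp add: a_def add_pos_nonneg)
  have "(1 + s powr (q/2)) powr (-2/q) = inverse ((1 + s powr (q/2)) powr (2/q))" for s
    using powr_minus[of "1 + s powr (q/2)" "2/q"] by (simp only: minus_divide_left)
  then have "sin_rescale q = (\<lambda>t. 2 powr (2/q) * t * (1 + t powr (q/2)) powr (-2/q))"
    unfolding sin_rescale_def divide_inverse by simp
  moreover have "((\<lambda>t. 2 powr (2/q) * t * (1 + t powr (q/2)) powr (-2/q)) has_real_derivative
      2 powr (2/q) * (1 + a) powr (-2/q)
      + 2 powr (2/q) * t * ((-2/q) * (1 + a) powr (-2/q - 1) * ((q/2) * t powr (q/2 - 1)))) (at t)"
    unfolding a_def using assms q \<open>0 < 1 + a\<close>[unfolded a_def] by (auto intro!: derivative_eq_intros)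
  ultimately have "(sin_rescale q has_real_derivative
      2 powr (2/q) * (1 + a) powr (-2/q)
      + 2 powr (2/q) * t * ((-2/q) * (1 + a) powr (-2/q - 1) * ((q/2) * t powr (q/2 - 1)))) (at t)"
    by simp
  then show ?thesis
  proof (rule DERIV_cong)
    define X where "X = (1 + a) powr (-2/q - 1)"
    have "(1 + a) powr (-2/q) = X * (1 + a)"
      using powr_self_mult[OF \<open>0 < 1 + a\<close>, of "-2/q - 1"] by (simp only: X_def diff_add_cancel)
    moreover have "t * t powr (q/2 - 1) = a"
      using powr_self_mult[OF assms, of "q/2 - 1"] by (simp add: a_def mult.commute)
    ultimately show "2 powr (2/q) * (1 + a) powr (-2/q)
        + 2 powr (2/q) * t * ((-2/q) * (1 + a) powr (-2/q - 1) * ((q/2) * t powr (q/2 - 1)))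
        = 2 powr (2/q) * (1 + t powr (q/2)) powr (-2/q - 1)"
      unfolding a_def[symmetric] X_def[symmetric] using q by (simp add: algebra_simps)
  qed
qed

lemma F_pq_sin_rescale:
  assumes "0 \<le> s" "s < 1"
  shows "F_pq (2*q/(2+q)) (q/2) (sin_rescale q s) = 2 powr (2/q) * F_pq (2*q/(2+q)) q s"
proof -
  define p where "p = 2*q/(2+q)"
  have exponent: "-2/q - 1 = 2 * (-1/p)"
    using q by (simp add: p_def field_simps)
  interpret F: increasing_primitive "{0..<1}" "\<lambda>t. (1 - t powr (q/2)) powr (-1/p)" "F_pq p (q/2)"
    using q by (intro increasing_primitive_F_pq) simp
  have "F_pq p (q/2) (sin_rescale q s) = 2 powr (2/q) * F_pq p q s"
  proof (rule F.substitution[OF increasing_primitive_F_pq[OF q]])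
    show "continuous_on {0..s} (sin_rescale q)"
      unfolding sin_rescale_def[abs_def] using q
      by (intro continuous_on_powr_right continuous_intros) (auto simp: add_nonneg_eq_0_iff)
    show "sin_rescale q ` {0..s} \<subseteq> {0..<1}"
      using sin_rescale_bounds assms by force
    fix t assume "0 < t" "t < s"
    then show "0 < sin_rescale q t"
      using sin_rescale_bounds(1)[of t] assms by simp
    show "(sin_rescale q has_real_derivative 2 powr (2/q) * (1 + t powr (q/2)) powr (-2/q - 1)) (at t)"
      using sin_rescale_has_derivative \<open>0 < t\<close> .
    define a where "a = t powr (q/2)"
    have "0 \<le> a" "a < 1"
      using powr_less_one[of "q/2" t] q \<open>0 < t\<close> \<open>t < s\<close> assms by (auto simp: a_def)
    have "sin_rescale q t powr (q/2) = 2 * a / (1 + a)"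
      using sin_rescale_powr[of t] \<open>0 < t\<close> by (simp add: a_def)
    then have "1 - sin_rescale q t powr (q/2) = (1 - a) / (1 + a)"
      using \<open>0 \<le> a\<close> by (simp add: field_simps)
    moreover have "t powr q = a\<^sup>2"
      using powr_half_squared[of t q] \<open>0 < t\<close> by (simp add: a_def)
    ultimately show "(1 - sin_rescale q t powr (q/2)) powr (-1/p) * (2 powr (2/q) * (1 + t powr (q/2)) powr (-2/q - 1))
        = 2 powr (2/q) * (1 - t powr q) powr (-1/p)"
      unfolding exponent a_def[symmetric]
      using powr_ratio_mult_powr[OF \<open>0 \<le> a\<close> \<open>a < 1\<close>, of "-1/p"] by (simp add: mult.left_commute)
  qed (use assms in \<open>auto simp: sin_rescale_def\<close>)
  then show ?thesis
    by (simp add: p_def)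
qed

end

(* At s = sinh_{2,q} x this is cosh_{2,q} x + sinh_{2,q}^(q/2) x. *)
definition cosh_sinh_sum :: "real \<Rightarrow> real \<Rightarrow> real" where
  "cosh_sinh_sum q s = (1 + s powr q) powr (1/2) + s powr (q/2)"

definition sinh_rescale :: "real \<Rightarrow> real \<Rightarrow> real" where
  "sinh_rescale q s = 2 powr (2/q) * s * cosh_sinh_sum q s powr (2/q)"

context
  fixes q :: real
  assumes q: "0 < q"
begin

lemma cosh_sinh_sum_pos: "0 < cosh_sinh_sum q s"
  by (simp add: cosh_sinh_sum_def add_pos_nonneg add_nonneg_eq_0_iff)

lemma cosh_sinh_sum_squared:
  assumes "0 \<le> s"
  shows "(cosh_sinh_sum q s)\<^sup>2 = 1 + 2 * s powr (q/2) * cosh_sinh_sum q s"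
  using one_plus_powr_half_squared[OF assms, of q]
  by (simp add: cosh_sinh_sum_def power2_eq_square algebra_simps)

lemma sinh_rescale_powr:
  assumes "0 \<le> s"
  shows "sinh_rescale q s powr (q/2) = 2 * s powr (q/2) * cosh_sinh_sum q s"
proof -
  have "(2 powr (2/q)) powr (q/2) = 2"
    using q by (simp add: powr_powr)
  moreover have "(cosh_sinh_sum q s powr (2/q)) powr (q/2) = cosh_sinh_sum q s"
    using q cosh_sinh_sum_pos[of s] by (simp add: powr_powr)
  ultimately show ?thesis
    using assms cosh_sinh_sum_pos by (simp add: sinh_rescale_def powr_mult less_imp_le)
qed

lemma cosh_sinh_sum_has_derivative:
  assumes "0 < s"
  shows "(cosh_sinh_sum q has_real_derivative
      q * s powr (q/2) * cosh_sinh_sum q s / (2 * s * (1 + s powr q) powr (1/2))) (at s)"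
proof -
  define w where "w = (1 + s powr q) powr (1/2)"
  define a where "a = s powr (q/2)"
  have "0 < 1 + s powr q" "0 < w"
    by (simp_all add: w_def add_pos_nonneg add_nonneg_eq_0_iff)
  have "(cosh_sinh_sum q has_real_derivative
      (1/2) * (1 + s powr q) powr (1/2 - 1) * (q * s powr (q - 1)) + (q/2) * s powr (q/2 - 1)) (at s)"
    unfolding cosh_sinh_sum_def[abs_def] using assms q \<open>0 < 1 + s powr q\<close>
    by (auto intro!: derivative_eq_intros)
  then show ?thesis
  proof (rule DERIV_cong)
    have "(1 + s powr q) powr (1/2 - 1) = 1 / w"
      using \<open>0 < 1 + s powr q\<close> by (simp add: w_def powr_minus_divide)
    moreover have "s powr (q - 1) = a\<^sup>2 / s" "s powr (q/2 - 1) = a / s"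
      using assms powr_half_squared[of s q] by (simp_all add: a_def powr_diff)
    moreover have "(1/2) * (1 / w) * (q * (a\<^sup>2 / s)) + (q/2) * (a / s) = q * a * (w + a) / (2 * s * w)"
      using assms \<open>0 < w\<close> by (simp add: field_simps power2_eq_square)
    ultimately show "(1/2) * (1 + s powr q) powr (1/2 - 1) * (q * s powr (q - 1)) + (q/2) * s powr (q/2 - 1)
        = q * s powr (q/2) * cosh_sinh_sum q s / (2 * s * (1 + s powr q) powr (1/2))"
      unfolding cosh_sinh_sum_def w_def[symmetric] a_def[symmetric] by simp
  qed
qed

lemma sinh_rescale_has_derivative:
  assumes "0 < s"
  shows "(sinh_rescale q has_real_derivative
      2 powr (2/q) * cosh_sinh_sum q s powr (2/q) * cosh_sinh_sum q s / (1 + s powr q) powr (1/2)) (at s)"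
proof -
  define e where "e = cosh_sinh_sum q s"
  define w where "w = (1 + s powr q) powr (1/2)"
  define a where "a = s powr (q/2)"
  have "0 < e" "0 < w"
    using cosh_sinh_sum_pos by (simp_all add: e_def w_def add_nonneg_eq_0_iff)
  have "(sinh_rescale q has_real_derivative
      2 powr (2/q) * e powr (2/q)
      + 2 powr (2/q) * s * ((2/q) * e powr (2/q - 1) * (q * a * e / (2 * s * w)))) (at s)"
    unfolding sinh_rescale_def[abs_def] e_def w_def a_def using assms q cosh_sinh_sum_pos
    by (auto intro!: derivative_eq_intros cosh_sinh_sum_has_derivative)
  then show ?thesis
  proof (rule DERIV_cong)
    have "e powr (2/q - 1) * e = e powr (2/q)"
      using powr_self_mult[OF \<open>0 < e\<close>, of "2/q - 1"] by (simp only: diff_add_cancel)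
    then have "s * ((2/q) * e powr (2/q - 1) * (q * a * e / (2 * s * w))) = e powr (2/q) * a / w"
      using assms q \<open>0 < w\<close> by (simp add: field_simps)
    then have "2 powr (2/q) * e powr (2/q)
        + 2 powr (2/q) * s * ((2/q) * e powr (2/q - 1) * (q * a * e / (2 * s * w)))
        = 2 powr (2/q) * e powr (2/q) + 2 powr (2/q) * (e powr (2/q) * a / w)"
      by (simp only: mult.assoc)
    also have "\<dots> = 2 powr (2/q) * e powr (2/q) * (w + a) / w"
      using \<open>0 < w\<close> by (simp add: field_simps)
    also have "w + a = e"
      by (simp add: e_def w_def a_def cosh_sinh_sum_def)
    finally show "2 powr (2/q) * e powr (2/q)
        + 2 powr (2/q) * s * ((2/q) * e powr (2/q - 1) * (q * a * e / (2 * s * w)))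
        = 2 powr (2/q) * cosh_sinh_sum q s powr (2/q) * cosh_sinh_sum q s / (1 + s powr q) powr (1/2)"
      by (simp only: e_def w_def)
  qed
qed

lemma G_pq_sinh_rescale:
  assumes "0 \<le> s"
  shows "G_pq (2*q/(2+q)) (q/2) (sinh_rescale q s) = 2 powr (2/q) * G_pq 2 q s"
proof -
  define p where "p = 2*q/(2+q)"
  interpret G: increasing_primitive "{0..}" "\<lambda>t. (1 + t powr (q/2)) powr (-1/p)" "G_pq p (q/2)"
    using q by (intro increasing_primitive_G_pq) simp
  have "G_pq p (q/2) (sinh_rescale q s) = 2 powr (2/q) * G_pq 2 q s"
  proof (rule G.substitution[OF increasing_primitive_G_pq[OF q]])
    show "continuous_on {0..s} (sinh_rescale q)"
      unfolding sinh_rescale_def[abs_def] cosh_sinh_sum_def using q cosh_sinh_sum_pos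
      by (intro continuous_on_powr_right continuous_intros)
         (auto simp: add_nonneg_eq_0_iff cosh_sinh_sum_def less_imp_neq[symmetric])
    fix t assume "0 < t" "t < s"
    then show "0 < sinh_rescale q t"
      using cosh_sinh_sum_pos[of t] by (simp add: sinh_rescale_def)
    show "(sinh_rescale q has_real_derivative
        2 powr (2/q) * cosh_sinh_sum q t powr (2/q) * cosh_sinh_sum q t / (1 + t powr q) powr (1/2)) (at t)"
      using sinh_rescale_has_derivative \<open>0 < t\<close> .
    define e where "e = cosh_sinh_sum q t"
    have "0 < e"
      using cosh_sinh_sum_pos by (simp add: e_def)
    have "1 + sinh_rescale q t powr (q/2) = e powr 2"
      using sinh_rescale_powr cosh_sinh_sum_squared \<open>0 < t\<close> \<open>0 < e\<close> by (simp add: e_def)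
    moreover have "2 * (-1/p) + (2/q + 1) = 0"
      using q by (simp add: p_def field_simps)
    ultimately have "(1 + sinh_rescale q t powr (q/2)) powr (-1/p) * (e powr (2/q) * e) = 1"
      using \<open>0 < e\<close> by (simp only: powr_powr powr_self_mult powr_add[symmetric]) simp
    moreover have "(1 + t powr q) powr (-1/2) = 1 / (1 + t powr q) powr (1/2)"
      by (simp add: powr_minus_divide)
    ultimately show "(1 + sinh_rescale q t powr (q/2)) powr (-1/p)
        * (2 powr (2/q) * cosh_sinh_sum q t powr (2/q) * cosh_sinh_sum q t / (1 + t powr q) powr (1/2))
        = 2 powr (2/q) * (1 + t powr q) powr (-1/2)"
      unfolding e_def[symmetric] by (simp add: field_simps)
  qed (use assms in \<open>auto simp: sinh_rescale_def\<close>)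
  then show ?thesis
    by (simp add: p_def)
qed

end

context
  fixes q :: real
  assumes q: "0 < q"
begin

lemma pi_pq_halved_index:
  "pi_pq (2*q/(2+q)) (q/2) = ennreal (2 powr (2/q)) * pi_pq (2*q/(2+q)) q"
proof -
  define p where "p = 2*q/(2+q)"
  interpret F_half: increasing_primitive "{0..<1}" "\<lambda>t. (1 - t powr (q/2)) powr (-1/p)" "F_pq p (q/2)"
    using q by (intro increasing_primitive_F_pq) simp
  interpret F: increasing_primitive "{0..<1}" "\<lambda>t. (1 - t powr q) powr (-1/p)" "F_pq p q"
    using q by (rule increasing_primitive_F_pq)
  have rescale: "ennreal (F_pq p (q/2) (sin_rescale q y)) = ennreal (2 powr (2/q)) * ennreal (F_pq p q y)"
    if "y \<in> {0..<1}" for y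
  proof -
    have "0 \<le> F_pq p q y"
      using mono_onD[OF F.mono_on_primitive, of 0 y] that by simp
    then show ?thesis
      using F_pq_sin_rescale[OF q] that by (simp add: p_def ennreal_mult)
  qed
  have "(SUP y\<in>{0..<1}. ennreal (F_pq p (q/2) y))
      = (SUP y\<in>{0..<1}. ennreal (2 powr (2/q)) * ennreal (F_pq p q y))"
  proof (rule antisym)
    show "(SUP y\<in>{0..<1}. ennreal (F_pq p (q/2) y))
        \<le> (SUP y\<in>{0..<1}. ennreal (2 powr (2/q)) * ennreal (F_pq p q y))"
    proof (rule SUP_mono)
      fix y :: real assume "y \<in> {0..<1}"
      then have "F_pq p (q/2) y \<le> F_pq p (q/2) (sin_rescale q y)"
        using sin_rescale_bounds[OF q] by (intro mono_onD[OF F_half.mono_on_primitive]) (auto intro: order_trans)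
      then show "\<exists>z\<in>{0..<1}. ennreal (F_pq p (q/2) y) \<le> ennreal (2 powr (2/q)) * ennreal (F_pq p q z)"
        using rescale \<open>y \<in> {0..<1}\<close> by (metis ennreal_leI)
    qed
    show "(SUP y\<in>{0..<1}. ennreal (2 powr (2/q)) * ennreal (F_pq p q y))
        \<le> (SUP y\<in>{0..<1}. ennreal (F_pq p (q/2) y))"
    proof (rule SUP_mono)
      fix y :: real assume "y \<in> {0..<1}"
      then show "\<exists>z\<in>{0..<1}. ennreal (2 powr (2/q)) * ennreal (F_pq p q y) \<le> ennreal (F_pq p (q/2) z)"
        using rescale sin_rescale_bounds[OF q] by (intro bexI[of _ "sin_rescale q y"]) (auto intro: order_trans)
    qed
  qed
  moreover have "0 < q/2"
    using q by simp
  ultimately show ?thesis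
    unfolding p_def pi_pq_eq_SUP_F_pq[OF q] pi_pq_eq_SUP_F_pq[OF \<open>0 < q/2\<close>]
    by (simp add: SUP_mult_left_ennreal mult.left_commute p_def)
qed

lemma G_pq_two_attains_below_half_pi:
  assumes "0 \<le> x" "ennreal x < pi_pq (2*q/(2+q)) q / 2"
  obtains \<sigma> where "0 \<le> \<sigma>" "G_pq 2 q \<sigma> = x"
proof -
  obtain s where s: "0 \<le> s" "s < 1" "F_pq (2*q/(2+q)) q s = x"
    using F_pq_attains_below_half_pi[OF q assms] .
  then have "G_pq 2 q (sin_to_sinh q s) = x"
    using G_pq_sin_to_sinh[of 2 q s] q by (simp add: add.commute)
  moreover have "0 \<le> sin_to_sinh q s"
    using s by (simp add: sin_to_sinh_def)
  ultimately show ?thesis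
    using that by blast
qed

lemma sin_cos_pq_halved_index:
  assumes "0 \<le> x" "ennreal x < pi_pq (2*q/(2+q)) q / 2"
  shows "sin_pq (2*q/(2+q)) (q/2) (2 powr (2/q) * x)
      = 2 powr (2/q) * sin_pq (2*q/(2+q)) q x / (1 + sin_pq (2*q/(2+q)) q x powr (q/2)) powr (2/q)"
    and "cos_pq (2*q/(2+q)) (q/2) (2 powr (2/q) * x)
      = ((1 - sin_pq (2*q/(2+q)) q x powr (q/2)) / (1 + sin_pq (2*q/(2+q)) q x powr (q/2))) powr (1/q + 1/2)"
proof -
  obtain s where s: "0 \<le> s" "s < 1" and x: "x = F_pq (2*q/(2+q)) q s"
    using F_pq_attains_below_half_pi[OF q assms] by metis
  have "0 < q/2" "0 \<le> sin_rescale q s" "sin_rescale q s < 1"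
    using q sin_rescale_bounds[OF q s] s by auto
  have sin: "sin_pq (2*q/(2+q)) q x = s"
    using sin_pq_F_pq q s x by blast
  have cx: "2 powr (2/q) * x = F_pq (2*q/(2+q)) (q/2) (sin_rescale q s)"
    using F_pq_sin_rescale[OF q s] x by simp
  then show "sin_pq (2*q/(2+q)) (q/2) (2 powr (2/q) * x)
      = 2 powr (2/q) * sin_pq (2*q/(2+q)) q x / (1 + sin_pq (2*q/(2+q)) q x powr (q/2)) powr (2/q)"
    using sin_pq_F_pq[OF \<open>0 < q/2\<close> \<open>0 \<le> sin_rescale q s\<close> \<open>sin_rescale q s < 1\<close>] sin
    by (simp add: sin_rescale_def)
  have "1 - sin_rescale q s powr (q/2) = (1 - s powr (q/2)) / (1 + s powr (q/2))"
    using sin_rescale_powr[OF q s(1)] by (simp add: field_simps add_nonneg_eq_0_iff)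
  moreover have "1 / (2*q/(2+q)) = 1/q + 1/2"
    using q by (simp add: field_simps)
  ultimately show "cos_pq (2*q/(2+q)) (q/2) (2 powr (2/q) * x)
      = ((1 - sin_pq (2*q/(2+q)) q x powr (q/2)) / (1 + sin_pq (2*q/(2+q)) q x powr (q/2))) powr (1/q + 1/2)"
    using cx sin cos_pq_F_pq[OF \<open>0 < q/2\<close> \<open>0 \<le> sin_rescale q s\<close> \<open>sin_rescale q s < 1\<close>] by simp
qed

lemma sinh_cosh_pq_halved_index:
  assumes "0 \<le> x" "ennreal x < pi_pq (2*q/(2+q)) q / 2"
  shows "sinh_pq (2*q/(2+q)) (q/2) (2 powr (2/q) * x)
      = 2 powr (2/q) * sinh_pq 2 q x * (cosh_pq 2 q x + sinh_pq 2 q x powr (q/2)) powr (2/q)"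
    and "cosh_pq (2*q/(2+q)) (q/2) (2 powr (2/q) * x)
      = (cosh_pq 2 q x + sinh_pq 2 q x powr (q/2)) powr (2/q + 1)"
proof -
  obtain \<sigma> where "0 \<le> \<sigma>" and x: "G_pq 2 q \<sigma> = x"
    using G_pq_two_attains_below_half_pi[OF assms] by metis
  have "0 < q/2"
    using q by simp
  have "0 \<le> sinh_rescale q \<sigma>"
    using \<open>0 \<le> \<sigma>\<close> cosh_sinh_sum_pos[OF q, of \<sigma>] by (simp add: sinh_rescale_def)
  have "sinh_pq 2 q x = \<sigma>" and "cosh_pq 2 q x = (1 + \<sigma> powr q) powr (1/2)"
    using sinh_pq_G_pq[OF q \<open>0 \<le> \<sigma>\<close>, of 2] cosh_pq_G_pq[OF q \<open>0 \<le> \<sigma>\<close>, of 2] x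
    by simp_all
  then have sum: "cosh_pq 2 q x + sinh_pq 2 q x powr (q/2) = cosh_sinh_sum q \<sigma>"
    by (simp add: cosh_sinh_sum_def)
  have cx: "2 powr (2/q) * x = G_pq (2*q/(2+q)) (q/2) (sinh_rescale q \<sigma>)"
    using G_pq_sinh_rescale[OF q \<open>0 \<le> \<sigma>\<close>] x by simp
  then show "sinh_pq (2*q/(2+q)) (q/2) (2 powr (2/q) * x)
      = 2 powr (2/q) * sinh_pq 2 q x * (cosh_pq 2 q x + sinh_pq 2 q x powr (q/2)) powr (2/q)"
    using sinh_pq_G_pq[OF \<open>0 < q/2\<close> \<open>0 \<le> sinh_rescale q \<sigma>\<close>] sum \<open>sinh_pq 2 q x = \<sigma>\<close>
    by (simp add: sinh_rescale_def)
  have "1 + sinh_rescale q \<sigma> powr (q/2) = cosh_sinh_sum q \<sigma> powr 2"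
    using sinh_rescale_powr[OF q \<open>0 \<le> \<sigma>\<close>] cosh_sinh_sum_squared[OF q \<open>0 \<le> \<sigma>\<close>]
      cosh_sinh_sum_pos[OF q, of \<sigma>]
    by simp
  moreover have "2 * (1 / (2*q/(2+q))) = 2/q + 1"
    using q by (simp add: field_simps)
  ultimately have "(1 + sinh_rescale q \<sigma> powr (q/2)) powr (1 / (2*q/(2+q)))
      = cosh_sinh_sum q \<sigma> powr (2/q + 1)"
    by (simp only: powr_powr)
  then show "cosh_pq (2*q/(2+q)) (q/2) (2 powr (2/q) * x)
      = (cosh_pq 2 q x + sinh_pq 2 q x powr (q/2)) powr (2/q + 1)"
    using cx sum cosh_pq_G_pq[OF \<open>0 < q/2\<close> \<open>0 \<le> sinh_rescale q \<sigma>\<close>] by simp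
qed

end

theorem theorem4p1:
  fixes q :: real
  assumes "0 < q"
  shows "pi_pq (2*q/(2+q)) (q/2) / ennreal (2 powr (2/q + 1)) = pi_pq (2*q/(2+q)) q / 2
    \<and> (\<forall>x::real. 0 \<le> x \<and> ennreal x < pi_pq (2*q/(2+q)) q / 2 \<longrightarrow>
        sin_pq (2*q/(2+q)) (q/2) (2 powr (2/q) * x)
          = 2 powr (2/q) * sin_pq (2*q/(2+q)) q x
            / (1 + sin_pq (2*q/(2+q)) q x powr (q/2)) powr (2/q)
      \<and> cos_pq (2*q/(2+q)) (q/2) (2 powr (2/q) * x)
          = ((1 - sin_pq (2*q/(2+q)) q x powr (q/2))
             / (1 + sin_pq (2*q/(2+q)) q x powr (q/2))) powr (1/q + 1/2)
      \<and> sinh_pq (2*q/(2+q)) (q/2) (2 powr (2/q) * x)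
          = 2 powr (2/q) * sinh_pq 2 q x
            * (cosh_pq 2 q x + sinh_pq 2 q x powr (q/2)) powr (2/q)
      \<and> cosh_pq (2*q/(2+q)) (q/2) (2 powr (2/q) * x)
          = (cosh_pq 2 q x + sinh_pq 2 q x powr (q/2)) powr (2/q + 1))"
proof (intro conjI allI impI)
  define S where "S = (SUP y\<in>{0..<1}. ennreal (F_pq (2*q/(2+q)) q y))"
  have "pi_pq (2*q/(2+q)) (q/2) = S * ennreal (2 powr (2/q + 1))"
    unfolding pi_pq_halved_index[OF assms] pi_pq_eq_SUP_F_pq[OF assms] S_def
    by (simp add: powr_add ennreal_mult mult_ac)
  then show "pi_pq (2*q/(2+q)) (q/2) / ennreal (2 powr (2/q + 1)) = pi_pq (2*q/(2+q)) q / 2"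
    unfolding half_pi_pq_eq_SUP_F_pq[OF assms] S_def[symmetric] by (simp add: ennreal_mult_divide_eq)
qed (use sin_cos_pq_halved_index[OF assms] sinh_cosh_pq_halved_index[OF assms] in blast)+

end
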